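(* Let $\theta$ be the parameters of an Elman RNN with $L$ layers such that every bias vector $\mathbf{b}^\ell$ ($0\le\ell\le L-1$) has all entries nonzero. Define $$\|\theta\|_2^2=\|\mathbf{W}_{\mathrm{ff}}^{L-1}\|_F^2+\|\mathbf{b}^{L-1}\|^2+\sum_{0<\ell<L}\left(\|\mathbf{W}_{\mathrm{rec}}^{\ell}\|_F^2+\|\mathbf{W}_{\mathrm{ff}}^{\ell-1}\|_F^2+\|\mathbf{b}^{\ell-1}\|^2\right),$$ and let $\mathcal{X}(\theta)$ be the set of $\theta'$ that minimize $\|\theta'\|_2$ subject to $\theta'=\mathcal{P}(\theta)$ for some $\mathcal{P}\in\mathcal{G}_{\mathrm{scaled}}$. Then for every $\theta',\theta''\in\mathcal{X}(\theta)$ there exists $\mathcal{P}\in\mathcal{G}_{\mathrm{perm}}$ (a transformation by unscaled permutations only) such that $\theta'=\mathcal{P}(\theta'')$.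
   Context: Elman RNN: parameters $\theta=(\mathbf{W}_{\mathrm{rec}}^{\ell+1},\mathbf{W}_{\mathrm{ff}}^{\ell},\mathbf{b}^{\ell})_{0\le\ell\le L-1}$ with $\mathbf{W}_{\mathrm{ff}}^{\ell}\in\mathbb{R}^{d_{\ell+1}\times d_\ell}$, $\mathbf{W}_{\mathrm{rec}}^{\ell+1}\in\mathbb{R}^{d_{\ell+1}\times d_{\ell+1}}$, $\mathbf{b}^\ell\in\mathbb{R}^{d_{\ell+1}}$. $\mathcal{G}_{\mathrm{lin}}$ is the set of sequences $\mathcal{P}=(\mathbf{P}^0,\dots,\mathbf{P}^L)$ with $\mathbf{P}^0=\mathbf{I}_{d_0}$, $\mathbf{P}^L=\mathbf{I}_{d_L}$ and $\mathbf{P}^\ell$ invertible $d_\ell\times d_\ell$ for $1\le\ell\le L-1$; it acts on $\theta$ by replacing, for each $1\le\ell\le L$, $(\mathbf{W}_{\mathrm{rec}}^{\ell},\mathbf{W}_{\mathrm{ff}}^{\ell-1},\mathbf{b}^{\ell-1})$ with $(\mathbf{P}^\ell\mathbf{W}_{\mathrm{rec}}^{\ell}(\mathbf{P}^\ell)^{-1},\ \mathbf{P}^\ell\mathbf{W}_{\mathrm{ff}}^{\ell-1}(\mathbf{P}^{\ell-1})^{-1},\ \mathbf{P}^\ell\mathbf{b}^{\ell-1})$, giving $\mathcal{P}(\theta)$. $\mathcal{G}_{\mathrm{perm}}\subset\mathcal{G}_{\mathrm{lin}}$: all $\mathbf{P}^\ell$ ($1\le\ell\le L-1$) are permutation matrices.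 $\mathcal{G}_{\mathrm{scaled}}\subset\mathcal{G}_{\mathrm{lin}}$: each $\mathbf{P}^\ell=\tilde{\mathbf{P}}^\ell\mathbf{D}^\ell$ with $\tilde{\mathbf{P}}^\ell$ a permutation matrix and $\mathbf{D}^\ell$ diagonal with strictly positive diagonal entries. *)

theory Defs
  imports "Jordan_Normal_Form.Determinant"
begin

text \<open>Parameters of an Elman RNN: for each layer index l, the recurrent matrix
  Wrec l (used for 1 <= l <= L), the feedforward matrix Wff l and the bias bias l
  (used for 0 <= l <= L-1).\<close>

record rnn_params =
  Wrec :: "nat \<Rightarrow> real mat"
  Wff  :: "nat \<Rightarrow> real mat"
  bias :: "nat \<Rightarrow> real vec"

definition rnn_wf :: "nat \<Rightarrow> (nat \<Rightarrow> nat) \<Rightarrow> rnn_params \<Rightarrow> bool" where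
  "rnn_wf L d \<theta> \<longleftrightarrow>
     (\<forall>l. 1 \<le> l \<and> l \<le> L \<longrightarrow> Wrec \<theta> l \<in> carrier_mat (d l) (d l)) \<and>
     (\<forall>l<L. Wff \<theta> l \<in> carrier_mat (d (Suc l)) (d l) \<and> bias \<theta> l \<in> carrier_vec (d (Suc l)))"

definition inv_mat :: "real mat \<Rightarrow> real mat" where
  "inv_mat A = (SOME B. inverts_mat A B \<and> inverts_mat B A)"

definition rnn_act :: "nat \<Rightarrow> (nat \<Rightarrow> real mat) \<Rightarrow> rnn_params \<Rightarrow> rnn_params" where
  "rnn_act L P \<theta> =
     \<lparr> Wrec = (\<lambda>l. if 1 \<le> l \<and> l \<le> L then P l * Wrec \<theta> l * inv_mat (P l) else Wrec \<theta> l),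
       Wff  = (\<lambda>l. if l < L then P (Suc l) * Wff \<theta> l * inv_mat (P l) else Wff \<theta> l),
       bias = (\<lambda>l. if l < L then P (Suc l) *\<^sub>v bias \<theta> l else bias \<theta> l) \<rparr>"

definition G_lin :: "nat \<Rightarrow> (nat \<Rightarrow> nat) \<Rightarrow> (nat \<Rightarrow> real mat) set" where
  "G_lin L d = {P. P 0 = 1\<^sub>m (d 0) \<and> P L = 1\<^sub>m (d L) \<and>
      (\<forall>l. 1 \<le> l \<and> l < L \<longrightarrow> P l \<in> carrier_mat (d l) (d l) \<and> invertible_mat (P l))}"

definition perm_matrix :: "nat \<Rightarrow> real mat \<Rightarrow> bool" where
  "perm_matrix n Q \<longleftrightarrow> (\<exists>\<sigma>. \<sigma> permutes {..<n} \<and>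
      Q = mat n n (\<lambda>(i, j). if i = \<sigma> j then 1 else 0))"

definition pos_diag_matrix :: "nat \<Rightarrow> real mat \<Rightarrow> bool" where
  "pos_diag_matrix n D \<longleftrightarrow> D \<in> carrier_mat n n \<and> diagonal_mat D \<and> (\<forall>i<n. D $$ (i, i) > 0)"

definition G_perm :: "nat \<Rightarrow> (nat \<Rightarrow> nat) \<Rightarrow> (nat \<Rightarrow> real mat) set" where
  "G_perm L d = {P \<in> G_lin L d. \<forall>l. 1 \<le> l \<and> l < L \<longrightarrow> perm_matrix (d l) (P l)}"

definition G_scaled :: "nat \<Rightarrow> (nat \<Rightarrow> nat) \<Rightarrow> (nat \<Rightarrow> real mat) set" where
  "G_scaled L d = {P \<in> G_lin L d. \<forall>l. 1 \<le> l \<and> l < L \<longrightarrow>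
      (\<exists>Q D. perm_matrix (d l) Q \<and> pos_diag_matrix (d l) D \<and> P l = Q * D)}"

definition frob_sq :: "real mat \<Rightarrow> real" where
  "frob_sq A = (\<Sum>i<dim_row A. \<Sum>j<dim_col A. (A $$ (i, j))\<^sup>2)"

definition vec_sq :: "real vec \<Rightarrow> real" where
  "vec_sq v = (\<Sum>i<dim_vec v. (v $ i)\<^sup>2)"

definition rnn_norm :: "nat \<Rightarrow> rnn_params \<Rightarrow> real" where
  "rnn_norm L \<theta> = sqrt (frob_sq (Wff \<theta> (L - 1)) + vec_sq (bias \<theta> (L - 1)) +
      (\<Sum>l\<in>{0<..<L}. frob_sq (Wrec \<theta> l) + frob_sq (Wff \<theta> (l - 1)) + vec_sq (bias \<theta> (l - 1))))"

definition X_min :: "nat \<Rightarrow> (nat \<Rightarrow> nat) \<Rightarrow> rnn_params \<Rightarrow> rnn_params set" where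
  "X_min L d \<theta> = {\<theta>'. (\<exists>P\<in>G_scaled L d. \<theta>' = rnn_act L P \<theta>) \<and>
      (\<forall>P\<in>G_scaled L d. rnn_norm L \<theta>' \<le> rnn_norm L (rnn_act L P \<theta>))}"

end

theory Submission imports Defs begin

text \<open>Every element of G_scaled acts layerwise by a matrix with a single positive entry
  c(\<rho> i) in each row i, at column \<rho> i.  The permutations only reindex the parameters,
  so the norm of the transformed network depends on the scalings c alone.  For two
  scalings c1, c2 the geometric mean sqrt(c1 c2) is again admissible, and by AM-GM its
  squared norm is at most the mean of the two squared norms, with a defect that contains
  the squared differences (c1 - c2) b of the rescaled biases.  If both c1 and c2 are
  minimal the defect vanishes, so nonzero biases force c1 = c2, and the two minimizers
  differ only by the permutations.\<close>

definition scaled_perm_mat :: "(nat \<Rightarrow> nat) \<Rightarrow> (nat \<Rightarrow> real) \<Rightarrow> nat \<Rightarrow> real mat" where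
  "scaled_perm_mat \<rho> c n = mat n n (\<lambda>(i, j). if j = \<rho> i then c j else 0)"

lemma scaled_perm_mat_carrier [simp]:
  "scaled_perm_mat \<rho> c n \<in> carrier_mat n n"
  "dim_row (scaled_perm_mat \<rho> c n) = n" "dim_col (scaled_perm_mat \<rho> c n) = n"
  by (auto simp: scaled_perm_mat_def)

lemma one_mat_eq_scaled_perm_mat: "1\<^sub>m n = scaled_perm_mat id (\<lambda>_. 1) n"
  by (rule eq_matI) (auto simp: scaled_perm_mat_def)

lemma scaled_perm_mat_mult_index:
  assumes p: "\<rho> permutes {..<n}" and A: "A \<in> carrier_mat n k" and i: "i < n" and m: "m < k"
  shows "(scaled_perm_mat \<rho> c n * A) $$ (i, m) = c (\<rho> i) * A $$ (\<rho> i, m)"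
proof -
  have r: "\<rho> i < n" using permutes_in_image[OF p] i by auto
  have "(scaled_perm_mat \<rho> c n * A) $$ (i, m) = (\<Sum>j\<in>{0..<n}. (if j = \<rho> i then c j else 0) * A $$ (j, m))"
    using A i m by (simp add: scaled_perm_mat_def scalar_prod_def)
  also have "\<dots> = (\<Sum>j\<in>{0..<n}. if j = \<rho> i then c j * A $$ (j, m) else 0)"
    by (rule sum.cong) auto
  also have "\<dots> = c (\<rho> i) * A $$ (\<rho> i, m)" using r by (simp add: sum.delta')
  finally show ?thesis .
qed

lemma mult_scaled_perm_mat_index:
  assumes p: "\<rho> permutes {..<n}" and A: "A \<in> carrier_mat k n" and i: "i < k" and j: "j < n"
  shows "(A * scaled_perm_mat \<rho> c n) $$ (i, j) = A $$ (i, Hilbert_Choice.inv \<rho> j) * c j"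
proof -
  have r: "Hilbert_Choice.inv \<rho> j < n" using permutes_in_image[OF permutes_inv[OF p]] j by auto
  have "(A * scaled_perm_mat \<rho> c n) $$ (i, j) =
      (\<Sum>m\<in>{0..<n}. A $$ (i, m) * (if j = \<rho> m then c j else 0))"
    using A i j by (simp add: scaled_perm_mat_def scalar_prod_def)
  also have "\<dots> = (\<Sum>m\<in>{0..<n}. if m = Hilbert_Choice.inv \<rho> j then A $$ (i, m) * c j else 0)"
    by (rule sum.cong) (auto simp: permutes_inverses[OF p])
  also have "\<dots> = A $$ (i, Hilbert_Choice.inv \<rho> j) * c j" using r by (simp add: sum.delta)
  finally show ?thesis .
qed

lemma scaled_perm_mat_mult_vec_index:
  assumes p: "\<rho> permutes {..<n}" and b: "b \<in> carrier_vec n" and i: "i < n"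
  shows "(scaled_perm_mat \<rho> c n *\<^sub>v b) $ i = c (\<rho> i) * b $ (\<rho> i)"
proof -
  have r: "\<rho> i < n" using permutes_in_image[OF p] i by auto
  have "(scaled_perm_mat \<rho> c n *\<^sub>v b) $ i = (\<Sum>j\<in>{0..<n}. (if j = \<rho> i then c j else 0) * b $ j)"
    using b i by (simp add: scaled_perm_mat_def scalar_prod_def)
  also have "\<dots> = (\<Sum>j\<in>{0..<n}. if j = \<rho> i then c j * b $ j else 0)"
    by (rule sum.cong) auto
  also have "\<dots> = c (\<rho> i) * b $ (\<rho> i)" using r by (simp add: sum.delta')
  finally show ?thesis .
qed

lemma scaled_perm_mat_inverse_mult:
  assumes p: "\<rho> permutes {..<n}" and c: "\<forall>i<n. c i > 0"
  shows "scaled_perm_mat \<rho> c n * scaled_perm_mat (Hilbert_Choice.inv \<rho>) (\<lambda>k. 1 / c (\<rho> k)) n = 1\<^sub>m n"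
    and "scaled_perm_mat (Hilbert_Choice.inv \<rho>) (\<lambda>k. 1 / c (\<rho> k)) n * scaled_perm_mat \<rho> c n = 1\<^sub>m n"
proof -
  have pi: "Hilbert_Choice.inv \<rho> permutes {..<n}" using permutes_inv[OF p] .
  show "scaled_perm_mat \<rho> c n * scaled_perm_mat (Hilbert_Choice.inv \<rho>) (\<lambda>k. 1 / c (\<rho> k)) n = 1\<^sub>m n"
  proof (rule eq_matI)
    fix i j assume i: "i < dim_row (1\<^sub>m n :: real mat)" and j: "j < dim_col (1\<^sub>m n :: real mat)"
    have "\<rho> i < n" using permutes_in_image[OF p] i by auto
    have "(scaled_perm_mat \<rho> c n * scaled_perm_mat (Hilbert_Choice.inv \<rho>) (\<lambda>k. 1 / c (\<rho> k)) n) $$ (i, j)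
        = c (\<rho> i) * scaled_perm_mat (Hilbert_Choice.inv \<rho>) (\<lambda>k. 1 / c (\<rho> k)) n $$ (\<rho> i, j)"
      using i j by (intro scaled_perm_mat_mult_index[OF p]) auto
    also have "\<dots> = 1\<^sub>m n $$ (i, j)" using i j c \<open>\<rho> i < n\<close>
      by (auto simp: scaled_perm_mat_def permutes_inverses[OF p] permutes_inv_eq[OF p])
    finally show "(scaled_perm_mat \<rho> c n * scaled_perm_mat (Hilbert_Choice.inv \<rho>) (\<lambda>k. 1 / c (\<rho> k)) n) $$ (i, j)
        = 1\<^sub>m n $$ (i, j)" .
  qed auto
  show "scaled_perm_mat (Hilbert_Choice.inv \<rho>) (\<lambda>k. 1 / c (\<rho> k)) n * scaled_perm_mat \<rho> c n = 1\<^sub>m n"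
  proof (rule eq_matI)
    fix i j assume i: "i < dim_row (1\<^sub>m n :: real mat)" and j: "j < dim_col (1\<^sub>m n :: real mat)"
    have "Hilbert_Choice.inv \<rho> i < n" using permutes_in_image[OF pi] i by auto
    have "(scaled_perm_mat (Hilbert_Choice.inv \<rho>) (\<lambda>k. 1 / c (\<rho> k)) n * scaled_perm_mat \<rho> c n) $$ (i, j)
        = 1 / c (\<rho> (Hilbert_Choice.inv \<rho> i)) * scaled_perm_mat \<rho> c n $$ (Hilbert_Choice.inv \<rho> i, j)"
      using i j by (intro scaled_perm_mat_mult_index[OF pi]) auto
    also have "\<dots> = 1\<^sub>m n $$ (i, j)" using i j c \<open>Hilbert_Choice.inv \<rho> i < n\<close>
      by (auto simp: scaled_perm_mat_def permutes_inverses[OF p])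
    finally show "(scaled_perm_mat (Hilbert_Choice.inv \<rho>) (\<lambda>k. 1 / c (\<rho> k)) n * scaled_perm_mat \<rho> c n) $$ (i, j)
        = 1\<^sub>m n $$ (i, j)" .
  qed auto
qed

lemma inv_mat_eqI:
  assumes A: "A \<in> carrier_mat n n" and B: "B \<in> carrier_mat n n"
    and AB: "A * B = 1\<^sub>m n" and BA: "B * A = 1\<^sub>m n"
  shows "inv_mat A = B"
proof -
  have "inverts_mat A B \<and> inverts_mat B A" using assms by (auto simp: inverts_mat_def)
  then have C: "inverts_mat A (inv_mat A) \<and> inverts_mat (inv_mat A) A"
    unfolding inv_mat_def by (rule someI)
  then have AC: "A * inv_mat A = 1\<^sub>m n" and CA: "inv_mat A * A = 1\<^sub>m (dim_row (inv_mat A))"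
    using A by (auto simp: inverts_mat_def)
  have "dim_row (inv_mat A) = n" "dim_col (inv_mat A) = n"
    using CA AC A by (metis index_mult_mat(2,3) index_one_mat(2,3) carrier_matD)+
  then have Cc: "inv_mat A \<in> carrier_mat n n" by auto
  have "inv_mat A = inv_mat A * (A * B)" using AB Cc by simp
  also have "\<dots> = (inv_mat A * A) * B" using Cc A B by simp
  also have "\<dots> = B" using CA \<open>dim_row (inv_mat A) = n\<close> B by simp
  finally show ?thesis .
qed

lemma inv_mat_scaled_perm_mat:
  assumes "\<rho> permutes {..<n}" and "\<forall>i<n. c i > 0"
  shows "inv_mat (scaled_perm_mat \<rho> c n) = scaled_perm_mat (Hilbert_Choice.inv \<rho>) (\<lambda>k. 1 / c (\<rho> k)) n"
  using inv_mat_eqI[OF _ _ scaled_perm_mat_inverse_mult[OF assms]] by simp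

lemma invertible_scaled_perm_mat:
  assumes "\<rho> permutes {..<n}" and "\<forall>i<n. c i > 0"
  shows "invertible_mat (scaled_perm_mat \<rho> c n)"
  unfolding invertible_mat_def inverts_mat_def using scaled_perm_mat_inverse_mult[OF assms]
  by (auto simp: square_mat.simps)

lemma scaled_perm_mat_conj:
  assumes p1: "\<rho>1 permutes {..<n1}" and p0: "\<rho>0 permutes {..<n0}" and c0: "\<forall>i<n0. c0 i > 0"
    and A: "A \<in> carrier_mat n1 n0"
  shows "scaled_perm_mat \<rho>1 c1 n1 * A * inv_mat (scaled_perm_mat \<rho>0 c0 n0) =
         mat n1 n0 (\<lambda>(i, j). c1 (\<rho>1 i) * A $$ (\<rho>1 i, \<rho>0 j) / c0 (\<rho>0 j))"
proof (rule eq_matI)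
  fix i j assume "i < dim_row (mat n1 n0 (\<lambda>(i, j). c1 (\<rho>1 i) * A $$ (\<rho>1 i, \<rho>0 j) / c0 (\<rho>0 j)))"
    and "j < dim_col (mat n1 n0 (\<lambda>(i, j). c1 (\<rho>1 i) * A $$ (\<rho>1 i, \<rho>0 j) / c0 (\<rho>0 j)))"
  then have i: "i < n1" and j: "j < n0" by auto
  have SA: "scaled_perm_mat \<rho>1 c1 n1 * A \<in> carrier_mat n1 n0" using A by auto
  have "\<rho>0 j < n0" using permutes_in_image[OF p0] j by auto
  have "(scaled_perm_mat \<rho>1 c1 n1 * A * inv_mat (scaled_perm_mat \<rho>0 c0 n0)) $$ (i, j) =
      (scaled_perm_mat \<rho>1 c1 n1 * A) $$ (i, Hilbert_Choice.inv (Hilbert_Choice.inv \<rho>0) j) * (1 / c0 (\<rho>0 j))"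
    unfolding inv_mat_scaled_perm_mat[OF p0 c0] using i j
    by (subst mult_scaled_perm_mat_index[OF permutes_inv[OF p0] SA]) (auto simp: permutes_inverses[OF p0])
  also have "\<dots> = c1 (\<rho>1 i) * A $$ (\<rho>1 i, \<rho>0 j) / c0 (\<rho>0 j)"
    using i j \<open>\<rho>0 j < n0\<close> by (simp add: permutes_inv_inv[OF p0] scaled_perm_mat_mult_index[OF p1 A])
  finally show "(scaled_perm_mat \<rho>1 c1 n1 * A * inv_mat (scaled_perm_mat \<rho>0 c0 n0)) $$ (i, j) =
      mat n1 n0 (\<lambda>(i, j). c1 (\<rho>1 i) * A $$ (\<rho>1 i, \<rho>0 j) / c0 (\<rho>0 j)) $$ (i, j)" using i j by simp
qed (auto simp: inv_mat_scaled_perm_mat[OF p0 c0])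

lemma perm_matrix_scaled_perm_mat:
  assumes p: "\<tau> permutes {..<n}"
  shows "perm_matrix n (scaled_perm_mat \<tau> (\<lambda>_. 1) n)"
  unfolding perm_matrix_def
proof (intro exI conjI)
  show "Hilbert_Choice.inv \<tau> permutes {..<n}" using permutes_inv[OF p] .
  show "scaled_perm_mat \<tau> (\<lambda>_. 1) n = mat n n (\<lambda>(i, j). if i = Hilbert_Choice.inv \<tau> j then 1 else 0)"
    unfolding scaled_perm_mat_def
    by (intro cong_mat) (auto simp: permutes_inv_eq[OF p] permutes_inverses[OF p])
qed

lemma perm_matrix_mult_pos_diag:
  assumes Q: "perm_matrix n Q" and D: "pos_diag_matrix n D"
  shows "\<exists>\<rho> c. \<rho> permutes {..<n} \<and> (\<forall>i<n. c i > 0) \<and> Q * D = scaled_perm_mat \<rho> c n"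
proof -
  obtain q where q: "q permutes {..<n}" and Qe: "Q = mat n n (\<lambda>(i, j). if i = q j then 1 else 0)"
    using Q unfolding perm_matrix_def by auto
  have qi: "Hilbert_Choice.inv q permutes {..<n}" using permutes_inv[OF q] .
  have QS: "Q = scaled_perm_mat (Hilbert_Choice.inv q) (\<lambda>_. 1) n" unfolding Qe scaled_perm_mat_def
    by (intro cong_mat) (auto simp: permutes_inv_eq[OF q] permutes_inverses[OF q])
  have Dc: "D \<in> carrier_mat n n" and Dd: "diagonal_mat D" and Dp: "\<forall>i<n. D $$ (i, i) > 0"
    using D unfolding pos_diag_matrix_def by auto
  have "Q * D = scaled_perm_mat (Hilbert_Choice.inv q) (\<lambda>j. D $$ (j, j)) n"
  proof (rule eq_matI)
    fix i j assume "i < dim_row (scaled_perm_mat (Hilbert_Choice.inv q) (\<lambda>j. D $$ (j, j)) n)"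
      and "j < dim_col (scaled_perm_mat (Hilbert_Choice.inv q) (\<lambda>j. D $$ (j, j)) n)"
    then have i: "i < n" and j: "j < n" by auto
    have "Hilbert_Choice.inv q i < n" using permutes_in_image[OF qi] i by auto
    have "(Q * D) $$ (i, j) = D $$ (Hilbert_Choice.inv q i, j)" unfolding QS using i j
      by (subst scaled_perm_mat_mult_index[OF qi Dc]) auto
    also have "\<dots> = scaled_perm_mat (Hilbert_Choice.inv q) (\<lambda>j. D $$ (j, j)) n $$ (i, j)"
      using Dd Dc i j \<open>Hilbert_Choice.inv q i < n\<close> unfolding diagonal_mat_def scaled_perm_mat_def by auto
    finally show "(Q * D) $$ (i, j) = scaled_perm_mat (Hilbert_Choice.inv q) (\<lambda>j. D $$ (j, j)) n $$ (i, j)" .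
  qed (use Dc QS in auto)
  then show ?thesis using qi Dp
    by (intro exI[of _ "Hilbert_Choice.inv q"] exI[of _ "\<lambda>j. D $$ (j, j)"]) auto
qed

definition scaled_perm_repr ::
    "nat \<Rightarrow> (nat \<Rightarrow> nat) \<Rightarrow> (nat \<Rightarrow> real mat) \<Rightarrow> (nat \<Rightarrow> nat \<Rightarrow> nat) \<Rightarrow> (nat \<Rightarrow> nat \<Rightarrow> real) \<Rightarrow> bool"
  where
  "scaled_perm_repr L d P \<rho> c \<longleftrightarrow>
     (\<forall>l\<le>L. \<rho> l permutes {..<d l} \<and> (\<forall>i<d l. c l i > 0) \<and> P l = scaled_perm_mat (\<rho> l) (c l) (d l)) \<and>
     (\<forall>l. (l = 0 \<or> L \<le> l) \<longrightarrow> \<rho> l = id \<and> c l = (\<lambda>_. 1))"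

lemma G_scaled_obtain_repr:
  assumes P: "P \<in> G_scaled L d"
  obtains \<rho> c where "scaled_perm_repr L d P \<rho> c"
proof -
  have "\<exists>\<rho> c. (l \<le> L \<longrightarrow> \<rho> permutes {..<d l} \<and> (\<forall>i<d l. 0 < c i) \<and> P l = scaled_perm_mat \<rho> c (d l))
            \<and> ((l = 0 \<or> L \<le> l) \<longrightarrow> \<rho> = id \<and> c = (\<lambda>_. 1))" for l
  proof (cases "1 \<le> l \<and> l < L")
    case True
    then obtain Q D where "perm_matrix (d l) Q" "pos_diag_matrix (d l) D" "P l = Q * D"
      using P unfolding G_scaled_def by auto
    then show ?thesis using perm_matrix_mult_pos_diag True by fastforce
  next
    case False
    then have "l = 0 \<or> L \<le> l" by auto
    moreover have "l \<le> L \<Longrightarrow> P l = scaled_perm_mat id (\<lambda>_. 1) (d l)"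
      using P calculation unfolding G_scaled_def G_lin_def one_mat_eq_scaled_perm_mat[symmetric] by auto
    ultimately show ?thesis by (intro exI[of _ id] exI[of _ "\<lambda>_. 1"]) (auto simp: permutes_id)
  qed
  then obtain \<rho> c where "\<forall>l. (l \<le> L \<longrightarrow> \<rho> l permutes {..<d l} \<and> (\<forall>i<d l. 0 < c l i)
      \<and> P l = scaled_perm_mat (\<rho> l) (c l) (d l)) \<and> ((l = 0 \<or> L \<le> l) \<longrightarrow> \<rho> l = id \<and> c l = (\<lambda>_. 1))"
    by metis
  then show ?thesis using that unfolding scaled_perm_repr_def by blast
qed

lemma diag_scaling_in_G_scaled:
  assumes "\<forall>l\<le>L. \<forall>i<d l. c l i > 0" and "\<forall>l. (l = 0 \<or> L \<le> l) \<longrightarrow> c l = (\<lambda>_. 1)"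
  shows "(\<lambda>l. scaled_perm_mat id (c l) (d l)) \<in> G_scaled L d"
    and "scaled_perm_repr L d (\<lambda>l. scaled_perm_mat id (c l) (d l)) (\<lambda>_. id) c"
proof -
  have "\<exists>Q D. perm_matrix (d l) Q \<and> pos_diag_matrix (d l) D \<and> scaled_perm_mat id (c l) (d l) = Q * D"
    if "1 \<le> l" "l < L" for l
  proof (intro exI conjI)
    show "perm_matrix (d l) (1\<^sub>m (d l))"
      unfolding one_mat_eq_scaled_perm_mat by (rule perm_matrix_scaled_perm_mat[OF permutes_id])
    show "pos_diag_matrix (d l) (scaled_perm_mat id (c l) (d l))"
      unfolding pos_diag_matrix_def diagonal_mat_def using assms(1) that
      by (auto simp: scaled_perm_mat_def)
  qed simp
  then show "(\<lambda>l. scaled_perm_mat id (c l) (d l)) \<in> G_scaled L d"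
    unfolding G_scaled_def G_lin_def using assms
    by (auto simp: one_mat_eq_scaled_perm_mat intro!: invertible_scaled_perm_mat permutes_id)
  show "scaled_perm_repr L d (\<lambda>l. scaled_perm_mat id (c l) (d l)) (\<lambda>_. id) c"
    unfolding scaled_perm_repr_def using assms by (auto intro: permutes_id)
qed

lemma perm_in_G_perm:
  assumes "\<forall>l\<le>L. \<tau> l permutes {..<d l}" and "\<forall>l. (l = 0 \<or> L \<le> l) \<longrightarrow> \<tau> l = id"
  shows "(\<lambda>l. scaled_perm_mat (\<tau> l) (\<lambda>_. 1) (d l)) \<in> G_perm L d"
    and "scaled_perm_repr L d (\<lambda>l. scaled_perm_mat (\<tau> l) (\<lambda>_. 1) (d l)) \<tau> (\<lambda>_ _. 1)"
  using assms unfolding G_perm_def G_lin_def scaled_perm_repr_def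
  by (auto simp: one_mat_eq_scaled_perm_mat intro!: invertible_scaled_perm_mat perm_matrix_scaled_perm_mat)

definition scaled_act ::
    "nat \<Rightarrow> (nat \<Rightarrow> nat) \<Rightarrow> (nat \<Rightarrow> nat \<Rightarrow> nat) \<Rightarrow> (nat \<Rightarrow> nat \<Rightarrow> real) \<Rightarrow> rnn_params \<Rightarrow> rnn_params"
  where
  "scaled_act L d \<rho> c \<theta> =
   \<lparr> Wrec = (\<lambda>l. if 1 \<le> l \<and> l \<le> L then mat (d l) (d l)
        (\<lambda>(i, j). c l (\<rho> l i) * Wrec \<theta> l $$ (\<rho> l i, \<rho> l j) / c l (\<rho> l j)) else Wrec \<theta> l),
     Wff = (\<lambda>l. if l < L then mat (d (Suc l)) (d l)
        (\<lambda>(i, j). c (Suc l) (\<rho> (Suc l) i) * Wff \<theta> l $$ (\<rho> (Suc l) i, \<rho> l j) / c l (\<rho> l j))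
        else Wff \<theta> l),
     bias = (\<lambda>l. if l < L then vec (d (Suc l)) (\<lambda>i. c (Suc l) (\<rho> (Suc l) i) * bias \<theta> l $ (\<rho> (Suc l) i))
        else bias \<theta> l) \<rparr>"

lemma rnn_wf_scaled_act: "rnn_wf L d (scaled_act L d \<rho> c \<theta>)"
  unfolding rnn_wf_def scaled_act_def by auto

lemma rnn_act_scaled_perm_repr:
  assumes P: "scaled_perm_repr L d P \<rho> c" and wf: "rnn_wf L d \<theta>"
  shows "rnn_act L P \<theta> = scaled_act L d \<rho> c \<theta>"
proof -
  have p: "\<rho> l permutes {..<d l}" and c: "\<forall>i<d l. c l i > 0"
    and e: "P l = scaled_perm_mat (\<rho> l) (c l) (d l)" if "l \<le> L" for l
    using P that unfolding scaled_perm_repr_def by auto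
  have "Wrec (rnn_act L P \<theta>) l = Wrec (scaled_act L d \<rho> c \<theta>) l" for l
  proof (cases "1 \<le> l \<and> l \<le> L")
    case True
    then have "Wrec \<theta> l \<in> carrier_mat (d l) (d l)" using wf unfolding rnn_wf_def by auto
    with True show ?thesis
      unfolding rnn_act_def scaled_act_def by (simp add: e scaled_perm_mat_conj[OF p p c])
  next
    case False
    then show ?thesis
      unfolding rnn_act_def scaled_act_def by (simp only: rnn_params.simps if_not_P[OF False] if_False)
  qed
  moreover have "Wff (rnn_act L P \<theta>) l = Wff (scaled_act L d \<rho> c \<theta>) l" for l
  proof (cases "l < L")
    case True
    then have "Wff \<theta> l \<in> carrier_mat (d (Suc l)) (d l)" using wf unfolding rnn_wf_def by auto
    with True show ?thesis
      unfolding rnn_act_def scaled_act_def by (simp add: e scaled_perm_mat_conj[OF p p c])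
  next
    case False
    then show ?thesis
      unfolding rnn_act_def scaled_act_def by (simp only: rnn_params.simps if_not_P[OF False] if_False)
  qed
  moreover have "bias (rnn_act L P \<theta>) l = bias (scaled_act L d \<rho> c \<theta>) l" for l
  proof (cases "l < L")
    case True
    then have "bias \<theta> l \<in> carrier_vec (d (Suc l))" using wf unfolding rnn_wf_def by auto
    with True show ?thesis unfolding rnn_act_def scaled_act_def
      by (auto simp: e scaled_perm_mat_mult_vec_index[OF p] intro!: eq_vecI simp del: index_mult_mat_vec)
  qed (simp add: rnn_act_def scaled_act_def)
  ultimately show ?thesis by (simp add: rnn_act_def scaled_act_def)
qed

lemma scaled_act_perm_scaled_act:
  assumes "\<forall>l\<le>L. \<tau> l permutes {..<d l}"
  shows "scaled_act L d \<tau> (\<lambda>_ _. 1) (scaled_act L d \<rho> c \<theta>) = scaled_act L d (\<lambda>l. \<rho> l \<circ> \<tau> l) c \<theta>"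
proof -
  have "\<And>l i. l \<le> L \<Longrightarrow> i < d l \<Longrightarrow> \<tau> l i < d l"
    using assms permutes_in_image by fastforce
  then show ?thesis by (auto simp: scaled_act_def intro!: cong_mat eq_vecI ext)
qed

lemma scaled_act_cong:
  assumes "\<forall>l\<le>L. \<rho> l permutes {..<d l}" and "\<forall>l\<le>L. \<forall>i<d l. c l i = c' l i"
  shows "scaled_act L d \<rho> c \<theta> = scaled_act L d \<rho> c' \<theta>"
proof -
  have "\<And>l i. l \<le> L \<Longrightarrow> i < d l \<Longrightarrow> \<rho> l i < d l"
    using assms(1) permutes_in_image by fastforce
  with assms(2) show ?thesis by (auto simp: scaled_act_def intro!: cong_mat eq_vecI ext)
qed

definition weighted_frob_sq :: "nat \<Rightarrow> nat \<Rightarrow> (nat \<Rightarrow> real) \<Rightarrow> real mat \<Rightarrow> (nat \<Rightarrow> real) \<Rightarrow> real" where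
  "weighted_frob_sq n m a A b = (\<Sum>i<n. \<Sum>j<m. (a i * A $$ (i, j) / b j)\<^sup>2)"

definition weighted_vec_sq :: "nat \<Rightarrow> (nat \<Rightarrow> real) \<Rightarrow> real vec \<Rightarrow> real" where
  "weighted_vec_sq n a v = (\<Sum>i<n. (a i * v $ i)\<^sup>2)"

lemma weighted_vec_sq_nonneg: "weighted_vec_sq n a v \<ge> 0"
  unfolding weighted_vec_sq_def by (intro sum_nonneg) auto

lemma frob_sq_permuted_mat:
  assumes p1: "\<rho>1 permutes {..<n1}" and p0: "\<rho>0 permutes {..<n0}"
  shows "frob_sq (mat n1 n0 (\<lambda>(i, j). c1 (\<rho>1 i) * A $$ (\<rho>1 i, \<rho>0 j) / c0 (\<rho>0 j)))
     = weighted_frob_sq n1 n0 c1 A c0"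
proof -
  let ?h = "\<lambda>i j. (c1 i * A $$ (i, j) / c0 j)\<^sup>2"
  have "(\<Sum>i<n1. \<Sum>j<n0. ?h (\<rho>1 i) (\<rho>0 j)) = (\<Sum>i<n1. \<Sum>j<n0. ?h (\<rho>1 i) j)"
    by (rule sum.cong[OF refl], rule sum.reindex_bij_betw[OF permutes_imp_bij[OF p0]])
  also have "\<dots> = (\<Sum>i<n1. \<Sum>j<n0. ?h i j)"
    by (rule sum.reindex_bij_betw[OF permutes_imp_bij[OF p1], where g = "\<lambda>i. \<Sum>j<n0. ?h i j"])
  finally show ?thesis unfolding frob_sq_def weighted_frob_sq_def by simp
qed

lemma vec_sq_permuted_vec:
  assumes "\<rho> permutes {..<n}"
  shows "vec_sq (vec n (\<lambda>i. c (\<rho> i) * b $ (\<rho> i))) = weighted_vec_sq n c b"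
  unfolding vec_sq_def weighted_vec_sq_def
  using sum.reindex_bij_betw[OF permutes_imp_bij[OF assms], where g = "\<lambda>i. (c i * b $ i)\<^sup>2"] by simp

definition layer_sq :: "(nat \<Rightarrow> nat) \<Rightarrow> rnn_params \<Rightarrow> (nat \<Rightarrow> nat \<Rightarrow> real) \<Rightarrow> nat \<Rightarrow> real" where
  "layer_sq d \<theta> c l = weighted_frob_sq (d l) (d l) (c l) (Wrec \<theta> l) (c l)
     + weighted_frob_sq (d l) (d (l - 1)) (c l) (Wff \<theta> (l - 1)) (c (l - 1))
     + weighted_vec_sq (d l) (c l) (bias \<theta> (l - 1))"

definition scaled_norm_sq :: "nat \<Rightarrow> (nat \<Rightarrow> nat) \<Rightarrow> rnn_params \<Rightarrow> (nat \<Rightarrow> nat \<Rightarrow> real) \<Rightarrow> real" where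
  "scaled_norm_sq L d \<theta> c = weighted_frob_sq (d L) (d (L - 1)) (c L) (Wff \<theta> (L - 1)) (c (L - 1))
     + weighted_vec_sq (d L) (c L) (bias \<theta> (L - 1)) + (\<Sum>l\<in>{0<..<L}. layer_sq d \<theta> c l)"

lemma rnn_norm_scaled_act:
  assumes L: "0 < L" and p: "\<forall>l\<le>L. \<rho> l permutes {..<d l}"
  shows "rnn_norm L (scaled_act L d \<rho> c \<theta>) = sqrt (scaled_norm_sq L d \<theta> c)"
proof -
  have "frob_sq (Wrec (scaled_act L d \<rho> c \<theta>) l) + frob_sq (Wff (scaled_act L d \<rho> c \<theta>) (l - 1))
      + vec_sq (bias (scaled_act L d \<rho> c \<theta>) (l - 1)) = layer_sq d \<theta> c l" if l: "l \<in> {0<..<L}" for l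
  proof -
    have "Suc (l - 1) = l" "l - 1 < L" using l by auto
    with l p show ?thesis unfolding scaled_act_def layer_sq_def
      by (simp add: frob_sq_permuted_mat vec_sq_permuted_vec)
  qed
  moreover have "Suc (L - 1) = L" "L - 1 < L" using L by auto
  ultimately show ?thesis using p unfolding rnn_norm_def scaled_norm_sq_def
    by (simp add: scaled_act_def frob_sq_permuted_mat vec_sq_permuted_vec)
qed

lemma weighted_frob_sq_geometric_mean:
  assumes a: "\<forall>i<n. a1 i > 0 \<and> a2 i > 0" and b: "\<forall>j<m. b1 j > 0 \<and> b2 j > 0"
  shows "2 * weighted_frob_sq n m (\<lambda>i. sqrt (a1 i * a2 i)) A (\<lambda>j. sqrt (b1 j * b2 j))
     \<le> weighted_frob_sq n m a1 A b1 + weighted_frob_sq n m a2 A b2"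
proof -
  have entry: "2 * (sqrt (a1 i * a2 i) * A $$ (i, j) / sqrt (b1 j * b2 j))\<^sup>2
      \<le> (a1 i * A $$ (i, j) / b1 j)\<^sup>2 + (a2 i * A $$ (i, j) / b2 j)\<^sup>2" if "i < n" "j < m" for i j
  proof -
    have pos: "a1 i > 0" "a2 i > 0" "b1 j > 0" "b2 j > 0" using a b that by auto
    then have s: "(sqrt (a1 i * a2 i))\<^sup>2 = a1 i * a2 i" "(sqrt (b1 j * b2 j))\<^sup>2 = b1 j * b2 j"
      by (metis less_imp_le mult_pos_pos real_sqrt_pow2)+
    have "2 * (sqrt (a1 i * a2 i) * A $$ (i, j) / sqrt (b1 j * b2 j))\<^sup>2
        = 2 * (a1 i * A $$ (i, j) / b1 j) * (a2 i * A $$ (i, j) / b2 j)"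
      using pos by (simp only: power_divide power_mult_distrib s) (simp add: power2_eq_square field_simps)
    also have "\<dots> \<le> (a1 i * A $$ (i, j) / b1 j)\<^sup>2 + (a2 i * A $$ (i, j) / b2 j)\<^sup>2"
      by (rule sum_squares_bound)
    finally show ?thesis .
  qed
  have "(\<Sum>i<n. \<Sum>j<m. 2 * (sqrt (a1 i * a2 i) * A $$ (i, j) / sqrt (b1 j * b2 j))\<^sup>2)
      \<le> (\<Sum>i<n. \<Sum>j<m. (a1 i * A $$ (i, j) / b1 j)\<^sup>2 + (a2 i * A $$ (i, j) / b2 j)\<^sup>2)"
    using entry by (intro sum_mono) auto
  then show ?thesis unfolding weighted_frob_sq_def by (simp add: sum_distrib_left sum.distrib)
qed

lemma weighted_vec_sq_geometric_mean:
  assumes "\<forall>i<n. a1 i > 0 \<and> a2 i > 0"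
  shows "2 * weighted_vec_sq n (\<lambda>i. sqrt (a1 i * a2 i)) v + weighted_vec_sq n (\<lambda>i. a1 i - a2 i) v
     = weighted_vec_sq n a1 v + weighted_vec_sq n a2 v"
proof -
  have "2 * (sqrt (a1 i * a2 i) * v $ i)\<^sup>2 + ((a1 i - a2 i) * v $ i)\<^sup>2
      = (a1 i * v $ i)\<^sup>2 + (a2 i * v $ i)\<^sup>2" if "i < n" for i
  proof -
    have "(sqrt (a1 i * a2 i))\<^sup>2 = a1 i * a2 i"
      using assms that by (metis less_imp_le mult_pos_pos real_sqrt_pow2)
    then show ?thesis by (simp only: power_mult_distrib) (simp add: power2_eq_square algebra_simps)
  qed
  then show ?thesis unfolding weighted_vec_sq_def
    by (simp add: sum_distrib_left sum.distrib[symmetric])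
qed

lemma scaled_norm_sq_geometric_mean:
  assumes c1: "\<forall>l\<le>L. \<forall>i<d l. c1 l i > 0" and c2: "\<forall>l\<le>L. \<forall>i<d l. c2 l i > 0"
  shows "2 * scaled_norm_sq L d \<theta> (\<lambda>l i. sqrt (c1 l i * c2 l i))
      + (\<Sum>l\<in>{0<..<L}. weighted_vec_sq (d l) (\<lambda>i. c1 l i - c2 l i) (bias \<theta> (l - 1)))
    \<le> scaled_norm_sq L d \<theta> c1 + scaled_norm_sq L d \<theta> c2"
proof -
  let ?cm = "\<lambda>l i. sqrt (c1 l i * c2 l i)"
  have pos: "\<forall>i<d l. c1 l i > 0 \<and> c2 l i > 0" if "l \<le> L" for l using c1 c2 that by auto
  note pL = pos[of L] pos[of "L - 1"]
  have "2 * layer_sq d \<theta> ?cm l + weighted_vec_sq (d l) (\<lambda>i. c1 l i - c2 l i) (bias \<theta> (l - 1))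
      \<le> layer_sq d \<theta> c1 l + layer_sq d \<theta> c2 l" if "l \<in> {0<..<L}" for l
  proof -
    have "l \<le> L" "l - 1 \<le> L" using that by auto
    note pl = pos[OF this(1)] pos[OF this(2)]
    show ?thesis
      using weighted_frob_sq_geometric_mean[OF pl(1) pl(1), of "Wrec \<theta> l"]
        weighted_frob_sq_geometric_mean[OF pl(1) pl(2), of "Wff \<theta> (l - 1)"]
        weighted_vec_sq_geometric_mean[OF pl(1), of "bias \<theta> (l - 1)"]
      unfolding layer_sq_def by (simp only: distrib_left)
  qed
  then have "(\<Sum>l\<in>{0<..<L}. 2 * layer_sq d \<theta> ?cm l + weighted_vec_sq (d l) (\<lambda>i. c1 l i - c2 l i) (bias \<theta> (l - 1)))
      \<le> (\<Sum>l\<in>{0<..<L}. layer_sq d \<theta> c1 l + layer_sq d \<theta> c2 l)"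
    by (rule sum_mono)
  moreover have "2 * weighted_frob_sq (d L) (d (L - 1)) (?cm L) (Wff \<theta> (L - 1)) (?cm (L - 1))
      \<le> weighted_frob_sq (d L) (d (L - 1)) (c1 L) (Wff \<theta> (L - 1)) (c1 (L - 1))
        + weighted_frob_sq (d L) (d (L - 1)) (c2 L) (Wff \<theta> (L - 1)) (c2 (L - 1))"
    by (rule weighted_frob_sq_geometric_mean[OF pL]) auto
  moreover have "2 * weighted_vec_sq (d L) (?cm L) (bias \<theta> (L - 1))
      \<le> weighted_vec_sq (d L) (c1 L) (bias \<theta> (L - 1)) + weighted_vec_sq (d L) (c2 L) (bias \<theta> (L - 1))"
    using weighted_vec_sq_geometric_mean[OF pL(1), of "bias \<theta> (L - 1)"]
      weighted_vec_sq_nonneg[of "d L" "\<lambda>i. c1 L i - c2 L i" "bias \<theta> (L - 1)"] by linarith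
  ultimately show ?thesis unfolding scaled_norm_sq_def
    by (simp add: sum.distrib sum_distrib_left algebra_simps)
qed

lemma scaling_eq_if_geometric_mean_not_smaller:
  assumes c1: "\<forall>l\<le>L. \<forall>i<d l. c1 l i > 0" and c2: "\<forall>l\<le>L. \<forall>i<d l. c2 l i > 0"
    and le1: "scaled_norm_sq L d \<theta> c1 \<le> scaled_norm_sq L d \<theta> (\<lambda>l i. sqrt (c1 l i * c2 l i))"
    and le2: "scaled_norm_sq L d \<theta> c2 \<le> scaled_norm_sq L d \<theta> (\<lambda>l i. sqrt (c1 l i * c2 l i))"
    and l: "l \<in> {0<..<L}" and i: "i < d l" and b: "bias \<theta> (l - 1) $ i \<noteq> 0"
  shows "c1 l i = c2 l i"
proof -
  have "(\<Sum>l\<in>{0<..<L}. weighted_vec_sq (d l) (\<lambda>i. c1 l i - c2 l i) (bias \<theta> (l - 1))) \<le> 0"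
    using scaled_norm_sq_geometric_mean[OF c1 c2, of \<theta>] le1 le2 by linarith
  then have "weighted_vec_sq (d l) (\<lambda>i. c1 l i - c2 l i) (bias \<theta> (l - 1)) = 0"
    using l weighted_vec_sq_nonneg sum_nonneg_eq_0_iff[of "{0<..<L}"]
    by (metis (no_types, lifting) finite_greaterThanLessThan order_antisym sum_nonneg)
  then have "((c1 l i - c2 l i) * bias \<theta> (l - 1) $ i)\<^sup>2 = 0"
    unfolding weighted_vec_sq_def using i by (subst (asm) sum_nonneg_eq_0_iff) auto
  with b show ?thesis by simp
qed

lemma minimizers_same_scaling:
  assumes wf: "rnn_wf L d \<theta>" and b: "\<forall>l<L. \<forall>i<d (Suc l). bias \<theta> l $ i \<noteq> 0"
    and r1: "scaled_perm_repr L d P1 \<rho>1 c1" and r2: "scaled_perm_repr L d P2 \<rho>2 c2"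
    and min1: "\<forall>P\<in>G_scaled L d. rnn_norm L (rnn_act L P1 \<theta>) \<le> rnn_norm L (rnn_act L P \<theta>)"
    and min2: "\<forall>P\<in>G_scaled L d. rnn_norm L (rnn_act L P2 \<theta>) \<le> rnn_norm L (rnn_act L P \<theta>)"
  shows "\<forall>l\<le>L. \<forall>i<d l. c1 l i = c2 l i"
proof (intro allI impI)
  fix l i assume "l \<le> L" "i < d l"
  show "c1 l i = c2 l i"
  proof (cases "l \<in> {0<..<L}")
    case l: True
    define cm where "cm = (\<lambda>l i. sqrt (c1 l i * c2 l i))"
    have pos1: "\<forall>l\<le>L. \<forall>i<d l. c1 l i > 0" and pos2: "\<forall>l\<le>L. \<forall>i<d l. c2 l i > 0"
      using r1 r2 unfolding scaled_perm_repr_def by auto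
    have "\<forall>l\<le>L. \<forall>i<d l. cm l i > 0" "\<forall>l. (l = 0 \<or> L \<le> l) \<longrightarrow> cm l = (\<lambda>_. 1)"
      using r1 r2 unfolding scaled_perm_repr_def cm_def by auto
    note cm = diag_scaling_in_G_scaled[OF this]
    have L: "0 < L" using l by auto
    have norm: "rnn_norm L (rnn_act L P \<theta>) = sqrt (scaled_norm_sq L d \<theta> c)"
      if "scaled_perm_repr L d P \<rho> c" for P \<rho> c
      using that rnn_act_scaled_perm_repr[OF that wf] rnn_norm_scaled_act[OF L]
      unfolding scaled_perm_repr_def by simp
    have "scaled_norm_sq L d \<theta> c1 \<le> scaled_norm_sq L d \<theta> cm"
      using min1 cm norm[OF r1] norm[OF cm(2)] by fastforce
    moreover have "scaled_norm_sq L d \<theta> c2 \<le> scaled_norm_sq L d \<theta> cm"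
      using min2 cm norm[OF r2] norm[OF cm(2)] by fastforce
    moreover have "bias \<theta> (l - 1) $ i \<noteq> 0" using b l \<open>i < d l\<close> by (cases l) auto
    ultimately show ?thesis
      using scaling_eq_if_geometric_mean_not_smaller[OF pos1 pos2] l \<open>i < d l\<close> unfolding cm_def by blast
  next
    case False
    then show ?thesis using r1 r2 \<open>l \<le> L\<close> unfolding scaled_perm_repr_def by auto
  qed
qed

lemma scaled_act_same_scaling_perm:
  assumes r1: "scaled_perm_repr L d P1 \<rho>1 c1" and r2: "scaled_perm_repr L d P2 \<rho>2 c2"
    and c: "\<forall>l\<le>L. \<forall>i<d l. c1 l i = c2 l i"
  shows "\<exists>P\<in>G_perm L d. scaled_act L d \<rho>1 c1 \<theta> = rnn_act L P (scaled_act L d \<rho>2 c2 \<theta>)"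
proof -
  have p1: "\<forall>l\<le>L. \<rho>1 l permutes {..<d l}" and p2: "\<forall>l\<le>L. \<rho>2 l permutes {..<d l}"
    using r1 r2 unfolding scaled_perm_repr_def by auto
  define \<tau> where "\<tau> = (\<lambda>l. Hilbert_Choice.inv (\<rho>2 l) \<circ> \<rho>1 l)"
  have \<tau>p: "\<forall>l\<le>L. \<tau> l permutes {..<d l}"
    unfolding \<tau>_def using p1 p2 by (auto intro: permutes_compose permutes_inv)
  have "\<forall>l. (l = 0 \<or> L \<le> l) \<longrightarrow> \<tau> l = id"
    using r1 r2 unfolding \<tau>_def scaled_perm_repr_def by auto
  note \<tau> = perm_in_G_perm[OF \<tau>p this]
  have "\<rho>2 l \<circ> \<tau> l = \<rho>1 l" for l
  proof (cases "l \<le> L")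
    case True
    then have "\<rho>2 l permutes {..<d l}" using p2 by auto
    then show ?thesis unfolding \<tau>_def by (auto simp: permutes_inverses)
  qed (use r1 r2 in \<open>auto simp: \<tau>_def scaled_perm_repr_def\<close>)
  then have "rnn_act L (\<lambda>l. scaled_perm_mat (\<tau> l) (\<lambda>_. 1) (d l)) (scaled_act L d \<rho>2 c2 \<theta>)
      = scaled_act L d \<rho>1 c2 \<theta>"
    using rnn_act_scaled_perm_repr[OF \<tau>(2) rnn_wf_scaled_act] scaled_act_perm_scaled_act[OF \<tau>p]
    by simp
  also have "\<dots> = scaled_act L d \<rho>1 c1 \<theta>" using scaled_act_cong[OF p1] c by metis
  finally show ?thesis using \<tau>(1) by metis
qed

theorem mainTheorem4:
  fixes L :: nat and d :: "nat \<Rightarrow> nat" and \<theta> \<theta>' \<theta>'' :: rnn_params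
  assumes "rnn_wf L d \<theta>"
    and "\<forall>l<L. \<forall>i<d (Suc l). bias \<theta> l $ i \<noteq> 0"
    and "\<theta>' \<in> X_min L d \<theta>" and "\<theta>'' \<in> X_min L d \<theta>"
  shows "\<exists>P\<in>G_perm L d. \<theta>' = rnn_act L P \<theta>''"
proof -
  obtain P1 where P1: "P1 \<in> G_scaled L d" "\<theta>' = rnn_act L P1 \<theta>"
    and min1: "\<forall>P\<in>G_scaled L d. rnn_norm L (rnn_act L P1 \<theta>) \<le> rnn_norm L (rnn_act L P \<theta>)"
    using assms(3) unfolding X_min_def by auto
  obtain P2 where P2: "P2 \<in> G_scaled L d" "\<theta>'' = rnn_act L P2 \<theta>"
    and min2: "\<forall>P\<in>G_scaled L d. rnn_norm L (rnn_act L P2 \<theta>) \<le> rnn_norm L (rnn_act L P \<theta>)"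
    using assms(4) unfolding X_min_def by auto
  obtain \<rho>1 c1 where r1: "scaled_perm_repr L d P1 \<rho>1 c1" using G_scaled_obtain_repr[OF P1(1)] .
  obtain \<rho>2 c2 where r2: "scaled_perm_repr L d P2 \<rho>2 c2" using G_scaled_obtain_repr[OF P2(1)] .
  have "\<forall>l\<le>L. \<forall>i<d l. c1 l i = c2 l i"
    using minimizers_same_scaling[OF assms(1,2) r1 r2 min1 min2] .
  then show ?thesis
    using scaled_act_same_scaling_perm[OF r1 r2] rnn_act_scaled_perm_repr[OF _ assms(1)] r1 r2 P1 P2
    by metis
qed

end
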